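(* If $R$ is a weak symmetric ring, then $R$ is NJ-symmetric.
   Context: Rings are associative with identity. $N(R)$ is the set of nilpotent elements, $J(R)$ the Jacobson radical. $R$ is weak symmetric if for all $a,b,c\in R$, $abc\in N(R)$ implies $acb\in N(R)$. $R$ is NJ-symmetric if for all $a,b,c\in R$, $abc\in N(R)$ implies $bac\in J(R)$. *)

theory Defs
  imports Main
begin

definition nilpotents :: "'a::ring_1 set" where
  "nilpotents = {a. \<exists>n::nat. a ^ n = 0}"

definition left_ideal :: "'a::ring_1 set \<Rightarrow> bool" where
  "left_ideal I \<longleftrightarrow> 0 \<in> I \<and> (\<forall>x\<in>I. \<forall>y\<in>I. x + y \<in> I) \<and> (\<forall>x\<in>I. - x \<in> I)
     \<and> (\<forall>r x. x \<in> I \<longrightarrow> r * x \<in> I)"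

definition maximal_left_ideal :: "'a::ring_1 set \<Rightarrow> bool" where
  "maximal_left_ideal M \<longleftrightarrow> left_ideal M \<and> M \<noteq> UNIV \<and>
     (\<forall>I. left_ideal I \<and> M \<subseteq> I \<longrightarrow> I = M \<or> I = UNIV)"

definition jacobson :: "'a::ring_1 set" where
  "jacobson = \<Inter>{M. maximal_left_ideal M}"

definition weak_symmetric :: "'a::ring_1 itself \<Rightarrow> bool" where
  "weak_symmetric _ \<longleftrightarrow> (\<forall>a b c::'a. a * b * c \<in> nilpotents \<longrightarrow> a * c * b \<in> nilpotents)"

definition NJ_symmetric :: "'a::ring_1 itself \<Rightarrow> bool" where
  "NJ_symmetric _ \<longleftrightarrow> (\<forall>a b c::'a. a * b * c \<in> nilpotents \<longrightarrow> b * a * c \<in> jacobson)"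

end

theory Submission
  imports Defs
begin

text \<open>
  Weak symmetry makes \<open>acb\<close> nilpotent, and since
  \<open>uv\<close> nilpotent implies \<open>vu\<close> nilpotent, so is \<open>x = bac\<close>. Weak symmetry also forces every
  left multiple \<open>rx\<close> of a nilpotent \<open>x\<close> to be nilpotent: by downward induction on \<open>k\<close>,
  if all \<open>s x\<^sup>k\<^sup>+\<^sup>1\<close> are nilpotent then so are all \<open>s x\<^sup>k t x\<close>, and \<open>(r x\<^sup>k)\<^sup>2\<close> has this
  shape. Finally a nil left ideal \<open>Rx\<close> lies in every maximal left ideal \<open>M\<close>: otherwise
  \<open>1 = m + rx\<close> with \<open>m \<in> M\<close>, and \<open>m = 1 - rx\<close> is left invertible because \<open>rx\<close> is nilpotent.
\<close>

lemma geometric_sum_times_one_minus: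
  "(\<Sum>i<n. (y::'a::ring_1) ^ i) * (1 - y) = 1 - y ^ n"
proof (induction n)
  case (Suc n)
  have "(\<Sum>i<Suc n. y ^ i) * (1 - y) = (\<Sum>i<n. y ^ i) * (1 - y) + y ^ n * (1 - y)"
    by (simp add: distrib_right)
  also have "\<dots> = 1 - y ^ Suc n"
    using Suc by (simp add: algebra_simps power_Suc2 power_commutes)
  finally show ?case .
qed simp

lemma left_inverse_one_minus_nilpotent:
  assumes "(y::'a::ring_1) \<in> nilpotents"
  obtains u where "u * (1 - y) = 1"
proof -
  from assms obtain n where "y ^ n = 0" by (auto simp: nilpotents_def)
  with geometric_sum_times_one_minus[where n = n and y = y] show thesis by (intro that) simp
qed

lemma mult_power_commute_left: "b * (a * b) ^ n = (b * a) ^ n * (b::'a::ring_1)"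
proof (induction n)
  case (Suc n)
  have "b * (a * b) ^ Suc n = (b * (a * b) ^ n) * (a * b)"
    by (simp only: power_Suc2 mult.assoc)
  also have "\<dots> = ((b * a) ^ n * (b * a)) * b"
    using Suc by (simp add: mult.assoc)
  finally show ?case by (simp only: power_Suc2)
qed simp

lemma nilpotent_mult_commute:
  assumes "(a::'a::ring_1) * b \<in> nilpotents"
  shows "b * a \<in> nilpotents"
proof -
  from assms obtain n where "(a * b) ^ n = 0" by (auto simp: nilpotents_def)
  moreover have "(b * a) ^ Suc n = b * (a * b) ^ n * a"
    by (simp only: mult_power_commute_left power_Suc2 mult.assoc)
  ultimately have "(b * a) ^ Suc n = 0" by simp
  then show ?thesis unfolding nilpotents_def by blast
qed

lemma nilpotent_if_square_nilpotent:
  assumes "(y::'a::ring_1) * y \<in> nilpotents"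
  shows "y \<in> nilpotents"
proof -
  from assms obtain n where "(y * y) ^ n = 0" by (auto simp: nilpotents_def)
  then have "y ^ (2 * n) = 0" by (simp add: power_mult power2_eq_square)
  then show ?thesis unfolding nilpotents_def by blast
qed

lemma weak_symmetric_swap_left_nilpotent:
  assumes "weak_symmetric TYPE('a::ring_1)" and "(a::'a) * b * c \<in> nilpotents"
  shows "b * a * c \<in> nilpotents"
proof -
  have "a * c * b \<in> nilpotents" using assms unfolding weak_symmetric_def by blast
  then have "b * (a * c) \<in> nilpotents" by (simp add: nilpotent_mult_commute mult.assoc)
  then show ?thesis by (simp add: mult.assoc)
qed

lemma weak_symmetric_left_multiples_power_step:
  assumes ws: "weak_symmetric TYPE('a::ring_1)"
    and higher: "\<And>s. s * (x::'a) ^ Suc (Suc k) \<in> nilpotents"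
  shows "r * x ^ Suc k \<in> nilpotents"
proof -
  have "s * x ^ Suc k * t * x \<in> nilpotents" for s t
  proof -
    have "s * x ^ Suc (Suc k) * t \<in> nilpotents"
      using nilpotent_mult_commute[of t "s * x ^ Suc (Suc k)"] higher[of "t * s"]
      by (simp add: mult.assoc)
    then have "(s * x ^ Suc k) * x * t \<in> nilpotents"
      by (simp only: mult.assoc power_Suc2)
    then show ?thesis using ws unfolding weak_symmetric_def by blast
  qed
  from this[of r "r * x ^ k"] have "(r * x ^ Suc k) * (r * x ^ Suc k) \<in> nilpotents"
    by (simp only: mult.assoc power_Suc2)
  then show ?thesis by (rule nilpotent_if_square_nilpotent)
qed

lemma weak_symmetric_left_multiple_nilpotent:
  assumes ws: "weak_symmetric TYPE('a::ring_1)" and "(x::'a) \<in> nilpotents"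
  shows "r * x \<in> nilpotents"
proof -
  from assms(2) obtain n where "x ^ n = 0" by (auto simp: nilpotents_def)
  then have "x ^ Suc n = 0" by simp
  have "1 \<le> Suc n" by simp
  then have "\<forall>s. s * x ^ 1 \<in> nilpotents"
  proof (induction rule: inc_induct)
    case base
    show ?case using \<open>x ^ Suc n = 0\<close> unfolding nilpotents_def by (auto intro: exI[of _ 1])
  next
    case (step k)
    then obtain j where "k = Suc j" by (cases k) auto
    with step.IH show ?case using weak_symmetric_left_multiples_power_step[OF ws] by simp
  qed
  then show ?thesis by simp
qed

lemma left_ideal_eq_UNIV_if_one_mem:
  assumes "left_ideal I" and "1 \<in> I"
  shows "I = UNIV"
proof -
  have "y * 1 \<in> I" for y using assms unfolding left_ideal_def by blast
  then show ?thesis by auto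
qed

lemma left_ideal_add_left_multiples:
  assumes "left_ideal M"
  shows "left_ideal {m + r * x | m r. m \<in> M}" (is "left_ideal ?I")
proof -
  have zero: "0 \<in> M" and add: "\<And>a b. a \<in> M \<Longrightarrow> b \<in> M \<Longrightarrow> a + b \<in> M"
    and neg: "\<And>a. a \<in> M \<Longrightarrow> - a \<in> M" and mult: "\<And>s a. a \<in> M \<Longrightarrow> s * a \<in> M"
    using assms unfolding left_ideal_def by blast+
  have "0 = 0 + 0 * x" by simp
  then have "0 \<in> ?I" using zero by blast
  moreover have "a + b \<in> ?I" if a: "a \<in> ?I" and b: "b \<in> ?I" for a b
  proof -
    obtain m r m' r' where "a = m + r * x" "b = m' + r' * x" "m \<in> M" "m' \<in> M"
      using a b by blast
    moreover from this have "a + b = (m + m') + (r + r') * x" by (simp add: algebra_simps)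
    ultimately show ?thesis using add by blast
  qed
  moreover have "- a \<in> ?I" and "s * a \<in> ?I" if a: "a \<in> ?I" for a s
  proof -
    obtain m r where "a = m + r * x" "m \<in> M" using a by blast
    moreover from this have "- a = - m + (- r) * x" "s * a = s * m + (s * r) * x"
      by (simp_all add: algebra_simps)
    ultimately show "- a \<in> ?I" "s * a \<in> ?I" using neg mult by blast+
  qed
  ultimately show ?thesis unfolding left_ideal_def by blast
qed

lemma maximal_left_ideal_one_decomposition:
  assumes "maximal_left_ideal M" and "x \<notin> M"
  obtains m r where "m \<in> M" and "1 = m + r * x"
proof -
  let ?I = "{m + r * x | m r. m \<in> M}"
  have M: "left_ideal M" using assms(1) by (simp add: maximal_left_ideal_def)
  have "m = m + 0 * x" for m by simp
  then have "M \<subseteq> ?I" by blast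
  have "x = 0 + 1 * x" by simp
  then have "x \<in> ?I" using M unfolding left_ideal_def by blast
  with \<open>M \<subseteq> ?I\<close> have "?I \<noteq> M" using assms(2) by blast
  then have "?I = UNIV"
    using assms(1) left_ideal_add_left_multiples[OF M] \<open>M \<subseteq> ?I\<close>
    unfolding maximal_left_ideal_def by blast
  then show thesis using that by blast
qed

lemma jacobson_if_left_multiples_nilpotent:
  assumes nil: "\<And>r. r * (x::'a::ring_1) \<in> nilpotents"
  shows "x \<in> jacobson"
  unfolding jacobson_def
proof (rule InterI, rule ccontr)
  fix M :: "'a set"
  assume "M \<in> {M. maximal_left_ideal M}" and "x \<notin> M"
  then have max: "maximal_left_ideal M" by simp
  then have M: "left_ideal M" "M \<noteq> UNIV" by (simp_all add: maximal_left_ideal_def)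
  obtain m r where "m \<in> M" "1 = m + r * x"
    using maximal_left_ideal_one_decomposition[OF max \<open>x \<notin> M\<close>] .
  moreover from \<open>1 = m + r * x\<close> have "m = 1 - r * x" by (simp add: algebra_simps)
  ultimately have "1 - r * x \<in> M" by simp
  obtain u where "u * (1 - r * x) = 1"
    using left_inverse_one_minus_nilpotent[OF nil] .
  moreover have "u * (1 - r * x) \<in> M"
    using M(1) \<open>1 - r * x \<in> M\<close> unfolding left_ideal_def by blast
  ultimately have "1 \<in> M" by simp
  with M show False using left_ideal_eq_UNIV_if_one_mem by blast
qed

theorem theorem2p11:
  assumes "weak_symmetric TYPE('a::ring_1)"
  shows "NJ_symmetric TYPE('a)"
  unfolding NJ_symmetric_def
proof (intro allI impI)
  fix a b c :: 'a
  assume "a * b * c \<in> nilpotents"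
  then have "b * a * c \<in> nilpotents"
    by (rule weak_symmetric_swap_left_nilpotent[OF assms])
  then have "r * (b * a * c) \<in> nilpotents" for r
    using assms weak_symmetric_left_multiple_nilpotent by blast
  then show "b * a * c \<in> jacobson" by (rule jacobson_if_left_multiples_nilpotent)
qed

end
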